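(* Let $\Phi:[a,b]\to\mathbb{C}$ be continuous and nowhere zero, let $x_0\in[a,b]$, and let $X^{(k)}=X^{(k)}(x_0,x)$, $\widetilde X^{(k)}=\widetilde X^{(k)}(x_0,x)$ be the $\Phi$-power functions defined below. Then for every finite even $n\ge 2$ and every $x\in[a,b]$, $$\sum_{k=0}^n (-1)^k\binom{n}{k}X^{(k)}(x_0,x)\,\widetilde X^{(n-k)}(x_0,x)=0,$$ equivalently $\widetilde X^{(n)}=\sum_{k=1}^n(-1)^{k+1}\binom{n}{k}X^{(k)}\widetilde X^{(n-k)}$.
   Context: For $x_0,x\in[a,b]$ the $\Phi$-power functions are defined recursively by $X^{(0)}(x_0,x)\equiv 1$, $\widetilde X^{(0)}(x_0,x)\equiv 1$ and, for $n\ge 1$, $$X^{(n)}(x_0,x)=n\int_{x_0}^x X^{(n-1)}(x_0,\xi)\,\big(\Phi(\xi)\big)^{(-1)^n}\,d\xi,\qquad \widetilde X^{(n)}(x_0,x)=n\int_{x_0}^x \widetilde X^{(n-1)}(x_0,\xi)\,\Big(\frac{1}{\Phi(\xi)}\Big)^{(-1)^n}\,d\xi.$$ *)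

theory Defs
  imports "HOL-Analysis.Analysis"
begin

definition oint :: "real \<Rightarrow> real \<Rightarrow> (real \<Rightarrow> complex) \<Rightarrow> complex" where
  "oint s t f = (if s \<le> t then integral {s..t} f else - integral {t..s} f)"

fun phi_pow :: "(real \<Rightarrow> complex) \<Rightarrow> real \<Rightarrow> nat \<Rightarrow> real \<Rightarrow> complex" where
  "phi_pow \<Phi> x0 0 x = 1"
| "phi_pow \<Phi> x0 (Suc n) x =
     of_nat (Suc n) * oint x0 x (\<lambda>\<xi>. phi_pow \<Phi> x0 n \<xi> *
        (if even (Suc n) then \<Phi> \<xi> else inverse (\<Phi> \<xi>)))"

definition phi_pow_tilde :: "(real \<Rightarrow> complex) \<Rightarrow> real \<Rightarrow> nat \<Rightarrow> real \<Rightarrow> complex" where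
  "phi_pow_tilde \<Phi> x0 n x = phi_pow (\<lambda>\<xi>. inverse (\<Phi> \<xi>)) x0 n x"

end

theory Submission
  imports Defs
begin

text \<open>The alternating sum S(x) vanishes at x0, since every summand contains a \<Phi>-power of
  positive order evaluated at x0. Its derivative telescopes: differentiating X^(k+1) produces
  the weight \<Phi>^((-1)^(k+1)), differentiating the tilde power of order n - k produces the
  same weight exactly when n is even, and (k + 1) C(n, k + 1) = (n - k) C(n, k) matches the
  binomial coefficients. Hence S is constant, and therefore zero.\<close>

lemma oint_eq_integral_diff:
  fixes g :: "real \<Rightarrow> complex"
  assumes "continuous_on {a..b} g" "x0 \<in> {a..b}" "x \<in> {a..b}"
  shows "oint x0 x g = integral {a..x} g - integral {a..x0} g"
proof -
  have int: "g integrable_on {a..u}" if "u \<in> {a..b}" for u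
    using that integrable_continuous_interval[OF assms(1)]
    by (auto intro: integrable_subinterval_real)
  show ?thesis
  proof (cases "x0 \<le> x")
    case True
    then show ?thesis
      using Henstock_Kurzweil_Integration.integral_combine[OF _ True int[OF assms(3)]] assms(2)
      by (simp add: oint_def algebra_simps)
  next
    case False
    then show ?thesis
      using Henstock_Kurzweil_Integration.integral_combine[OF _ _ int[OF assms(2)], of x] assms(3)
      by (simp add: oint_def algebra_simps)
  qed
qed

lemma has_vector_derivative_oint:
  fixes g :: "real \<Rightarrow> complex"
  assumes "continuous_on {a..b} g" "x0 \<in> {a..b}" "x \<in> {a..b}"
  shows "((\<lambda>u. oint x0 u g) has_vector_derivative g x) (at x within {a..b})"
proof (rule has_vector_derivative_transform[OF assms(3)])
  show "oint x0 u g = integral {a..u} g - integral {a..x0} g" if "u \<in> {a..b}" for u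
    using oint_eq_integral_diff[OF assms(1,2) that] .
  show "((\<lambda>u. integral {a..u} g - integral {a..x0} g) has_vector_derivative g x)
      (at x within {a..b})"
    using has_vector_derivative_diff[OF integral_has_vector_derivative[OF assms(1,3)]
        has_vector_derivative_const]
    by simp
qed

definition phi_weight :: "(real \<Rightarrow> complex) \<Rightarrow> nat \<Rightarrow> real \<Rightarrow> complex" where
  "phi_weight \<Phi> k t = (if even k then \<Phi> t else inverse (\<Phi> t))"

lemma phi_pow_Suc_eq_oint:
  "phi_pow \<Phi> x0 (Suc k) x =
    of_nat (Suc k) * oint x0 x (\<lambda>t. phi_pow \<Phi> x0 k t * phi_weight \<Phi> (Suc k) t)"
  by (simp add: phi_weight_def)

lemma continuous_on_phi_weight:
  assumes "continuous_on {a..b} \<Phi>" "\<forall>t\<in>{a..b}. \<Phi> t \<noteq> 0"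
  shows "continuous_on {a..b} (phi_weight \<Phi> k)"
  using assms by (cases "even k") (auto simp: phi_weight_def intro: continuous_on_inverse)

lemma phi_pow_at_base: "phi_pow \<Phi> x0 k x0 = (if k = 0 then 1 else 0)"
  by (cases k) (simp_all add: oint_def)

lemma has_vector_derivative_phi_pow_Suc:
  assumes "continuous_on {a..b} \<Phi>" "\<forall>t\<in>{a..b}. \<Phi> t \<noteq> 0" "x0 \<in> {a..b}"
    and "continuous_on {a..b} (phi_pow \<Phi> x0 k)" "x \<in> {a..b}"
  shows "(phi_pow \<Phi> x0 (Suc k) has_vector_derivative
      of_nat (Suc k) * (phi_pow \<Phi> x0 k x * phi_weight \<Phi> (Suc k) x)) (at x within {a..b})"
proof -
  have "continuous_on {a..b} (\<lambda>t. phi_pow \<Phi> x0 k t * phi_weight \<Phi> (Suc k) t)"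
    using assms(4) continuous_on_phi_weight[OF assms(1,2)] by (intro continuous_intros)
  from has_vector_derivative_mult_right[OF has_vector_derivative_oint[OF this assms(3,5)]]
  show ?thesis
    unfolding phi_pow_Suc_eq_oint[abs_def] .
qed

lemma continuous_on_phi_pow:
  assumes "continuous_on {a..b} \<Phi>" "\<forall>t\<in>{a..b}. \<Phi> t \<noteq> 0" "x0 \<in> {a..b}"
  shows "continuous_on {a..b} (phi_pow \<Phi> x0 k)"
proof (induction k)
  case 0
  show ?case by simp
next
  case (Suc k)
  show ?case
    unfolding continuous_on_eq_continuous_within
    using has_vector_derivative_continuous[OF has_vector_derivative_phi_pow_Suc[OF assms Suc]]
    by blast
qed

lemma has_vector_derivative_phi_pow:
  assumes "continuous_on {a..b} \<Phi>" "\<forall>t\<in>{a..b}. \<Phi> t \<noteq> 0" "x0 \<in> {a..b}" "x \<in> {a..b}"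
  shows "(phi_pow \<Phi> x0 k has_vector_derivative
      of_nat k * (phi_pow \<Phi> x0 (k - 1) x * phi_weight \<Phi> k x)) (at x within {a..b})"
proof (cases k)
  case 0
  have "phi_pow \<Phi> x0 0 = (\<lambda>_. 1)" by auto
  then show ?thesis
    using 0 by (simp add: has_vector_derivative_const)
next
  case (Suc j)
  then show ?thesis
    using has_vector_derivative_phi_pow_Suc[OF assms(1-3) continuous_on_phi_pow[OF assms(1-3)]
        assms(4)]
    by simp
qed

lemma Suc_times_binomial_Suc: "Suc k * (n choose Suc k) = (n - k) * (n choose k)"
  using binomial_absorption binomial_absorb_comp by metis

lemma alternating_binomial_sum_telescopes:
  fixes X Y w v :: "nat \<Rightarrow> 'a::comm_ring_1"
  assumes "\<And>j. j < n \<Longrightarrow> w (Suc j) = v (n - j)"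
  shows "(\<Sum>k\<le>n. (-1)^k * of_nat (n choose k) *
      (X k * (of_nat (n - k) * (Y (n - k - 1) * v (n - k))) + of_nat k * (X (k - 1) * w k) * Y (n - k)))
    = 0"
proof -
  define c where
    "c j = (-1)^j * of_nat ((n - j) * (n choose j)) * X j * v (n - j) * Y (n - Suc j)" for j
  have left: "(\<Sum>k\<le>n. (-1)^k * of_nat (n choose k) * (of_nat k * (X (k - 1) * w k) * Y (n - k)))
      = - (\<Sum>j<n. c j)"
  proof -
    have "(\<Sum>k\<le>n. (-1)^k * of_nat (n choose k) * (of_nat k * (X (k - 1) * w k) * Y (n - k)))
        = (\<Sum>j<n. (-1)^Suc j * of_nat (Suc j * (n choose Suc j)) * X j * w (Suc j) * Y (n - Suc j))"
      by (simp add: sum.atMost_shift lessThan_Suc_atMost[symmetric] sum.lessThan_Suc_shift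
          binomial_eq_0 algebra_simps del: sum.lessThan_Suc)
    also have "\<dots> = - (\<Sum>j<n. c j)"
      unfolding Suc_times_binomial_Suc sum_negf[symmetric] c_def
      by (intro sum.cong refl) (auto simp: assms)
    finally show ?thesis .
  qed
  have right: "(\<Sum>k\<le>n. (-1)^k * of_nat (n choose k) *
      (X k * (of_nat (n - k) * (Y (n - k - 1) * v (n - k))))) = (\<Sum>j<n. c j)"
    by (simp add: c_def lessThan_Suc_atMost[symmetric] algebra_simps)
  show ?thesis
    using left right by (simp add: distrib_left sum.distrib)
qed

lemma has_vector_derivative_alternating_binomial_sum:
  fixes X Y :: "nat \<Rightarrow> real \<Rightarrow> 'a::real_normed_field"
  assumes "\<And>k. (X k has_vector_derivative of_nat k * (X (k - 1) x * w k)) (at x within s)"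
    and "\<And>k. (Y k has_vector_derivative of_nat k * (Y (k - 1) x * v k)) (at x within s)"
    and "\<And>j. j < n \<Longrightarrow> w (Suc j) = v (n - j)"
  shows "((\<lambda>u. \<Sum>k\<le>n. (-1)^k * of_nat (n choose k) * (X k u * Y (n - k) u))
      has_vector_derivative 0) (at x within s)"
proof -
  have "((\<lambda>u. \<Sum>k\<le>n. (-1)^k * of_nat (n choose k) * (X k u * Y (n - k) u))
      has_vector_derivative (\<Sum>k\<le>n. (-1)^k * of_nat (n choose k) *
        (X k x * (of_nat (n - k) * (Y (n - k - 1) x * v (n - k))) +
         of_nat k * (X (k - 1) x * w k) * Y (n - k) x)))
      (at x within s)"
    by (intro has_vector_derivative_sum has_vector_derivative_mult_right has_vector_derivative_mult assms)
  then show ?thesis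
    using alternating_binomial_sum_telescopes[where X="\<lambda>k. X k x" and Y="\<lambda>k. Y k x"
        and w=w and v=v and n=n, OF assms(3)]
    by simp
qed

theorem theorem3:
  fixes \<Phi> :: "real \<Rightarrow> complex" and a b x0 x :: real and n :: nat
  assumes "continuous_on {a..b} \<Phi>"
    and "\<forall>t\<in>{a..b}. \<Phi> t \<noteq> 0"
    and "x0 \<in> {a..b}"
    and "even n" and "n \<ge> 2"
    and "x \<in> {a..b}"
  shows "(\<Sum>k=0..n. (-1)^k * of_nat (n choose k) * phi_pow \<Phi> x0 k x
            * phi_pow_tilde \<Phi> x0 (n - k) x) = 0"
proof -
  define \<Psi> where "\<Psi> = (\<lambda>t. inverse (\<Phi> t))"
  have \<Psi>: "continuous_on {a..b} \<Psi>" "\<forall>t\<in>{a..b}. \<Psi> t \<noteq> 0"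
    using assms(1,2) unfolding \<Psi>_def by (auto intro: continuous_on_inverse)
  define S where
    "S u = (\<Sum>k\<le>n. (-1)^k * of_nat (n choose k) * (phi_pow \<Phi> x0 k u * phi_pow \<Psi> x0 (n - k) u))"
    for u
  have weights: "phi_weight \<Phi> (Suc j) t = phi_weight \<Psi> (n - j) t" if "j < n" for j t
    using that \<open>even n\<close> by (simp add: \<Psi>_def phi_weight_def)
  have "(S has_vector_derivative 0) (at u within {a..b})" if "u \<in> {a..b}" for u
    unfolding S_def[abs_def]
    by (rule has_vector_derivative_alternating_binomial_sum[OF
          has_vector_derivative_phi_pow[OF assms(1-3) that]
          has_vector_derivative_phi_pow[OF \<Psi> assms(3) that] weights])
  then obtain C where "\<And>u. u \<in> {a..b} \<Longrightarrow> S u = C"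
    using has_vector_derivative_zero_constant[of "{a..b}" S] by auto
  moreover have "S x0 = 0"
    unfolding S_def by (intro sum.neutral) (use \<open>n \<ge> 2\<close> in \<open>auto simp: phi_pow_at_base\<close>)
  ultimately have "S x = 0"
    using assms(3,6) by metis
  then show ?thesis
    by (simp add: S_def phi_pow_tilde_def \<Psi>_def atLeast0AtMost mult.assoc)
qed

end
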